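(* Let $M$ be a self-similar right $R$-module. Then $M$ is quasi-pseudo principally injective if and only if $M$ is semisimple.
   Context: All rings are associative with identity and all modules are unitary right $R$-modules. A submodule $N$ of $M$ is called $M$-cyclic if $N\cong M/L$ for some submodule $L$ of $M$ (equivalently, $N$ is the image of an endomorphism of $M$). $M$ is quasi-pseudo principally injective if for every $M$-cyclic submodule $A$ of $M$, every $R$-monomorphism $A\to M$ extends to an $R$-endomorphism of $M$. A module $M$ is self-similar if every nonzero submodule of $M$ is isomorphic to $M$. A module is semisimple if every submodule is a direct summand. *)

theory Defs
  imports "HOL-Algebra.Ring"
begin

text \<open>Right R-modules: the underlying abelian group is the additive structure of the
record M (its multiplicative part is ignored); scalar multiplication acts on the right,
written s x r for x r.\<close>

definition right_module ::
  "('a, 'c) ring_scheme \<Rightarrow> ('b, 'd) ring_scheme \<Rightarrow> ('b \<Rightarrow> 'a \<Rightarrow> 'b) \<Rightarrow> bool" where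
  "right_module R M s \<longleftrightarrow> ring R \<and> abelian_group M \<and>
     (\<forall>x\<in>carrier M. \<forall>r\<in>carrier R. s x r \<in> carrier M) \<and>
     (\<forall>x\<in>carrier M. \<forall>y\<in>carrier M. \<forall>r\<in>carrier R. s (x \<oplus>\<^bsub>M\<^esub> y) r = s x r \<oplus>\<^bsub>M\<^esub> s y r) \<and>
     (\<forall>x\<in>carrier M. \<forall>r\<in>carrier R. \<forall>t\<in>carrier R. s x (r \<oplus>\<^bsub>R\<^esub> t) = s x r \<oplus>\<^bsub>M\<^esub> s x t) \<and>
     (\<forall>x\<in>carrier M. \<forall>r\<in>carrier R. \<forall>t\<in>carrier R. s x (r \<otimes>\<^bsub>R\<^esub> t) = s (s x r) t) \<and>
     (\<forall>x\<in>carrier M. s x \<one>\<^bsub>R\<^esub> = x)"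

definition submod ::
  "('a, 'c) ring_scheme \<Rightarrow> ('b, 'd) ring_scheme \<Rightarrow> ('b \<Rightarrow> 'a \<Rightarrow> 'b) \<Rightarrow> 'b set \<Rightarrow> bool" where
  "submod R M s N \<longleftrightarrow> N \<subseteq> carrier M \<and> \<zero>\<^bsub>M\<^esub> \<in> N \<and>
     (\<forall>x\<in>N. \<forall>y\<in>N. x \<oplus>\<^bsub>M\<^esub> y \<in> N) \<and> (\<forall>x\<in>N. a_inv M x \<in> N) \<and>
     (\<forall>x\<in>N. \<forall>r\<in>carrier R. s x r \<in> N)"

definition mod_hom ::
  "('a, 'c) ring_scheme \<Rightarrow> ('b, 'd) ring_scheme \<Rightarrow> ('b \<Rightarrow> 'a \<Rightarrow> 'b) \<Rightarrow> 'b set \<Rightarrow> 'b set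
   \<Rightarrow> ('b \<Rightarrow> 'b) \<Rightarrow> bool" where
  "mod_hom R M s A B f \<longleftrightarrow> f \<in> A \<rightarrow> B \<and>
     (\<forall>x\<in>A. \<forall>y\<in>A. f (x \<oplus>\<^bsub>M\<^esub> y) = f x \<oplus>\<^bsub>M\<^esub> f y) \<and>
     (\<forall>x\<in>A. \<forall>r\<in>carrier R. f (s x r) = s (f x) r)"

definition mod_endo ::
  "('a, 'c) ring_scheme \<Rightarrow> ('b, 'd) ring_scheme \<Rightarrow> ('b \<Rightarrow> 'a \<Rightarrow> 'b) \<Rightarrow> ('b \<Rightarrow> 'b) \<Rightarrow> bool" where
  "mod_endo R M s g \<longleftrightarrow> mod_hom R M s (carrier M) (carrier M) g"

text \<open>N is M-cyclic: N is the image of an endomorphism of M (equivalently N \<cong> M/L).\<close>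
definition M_cyclic ::
  "('a, 'c) ring_scheme \<Rightarrow> ('b, 'd) ring_scheme \<Rightarrow> ('b \<Rightarrow> 'a \<Rightarrow> 'b) \<Rightarrow> 'b set \<Rightarrow> bool" where
  "M_cyclic R M s N \<longleftrightarrow> submod R M s N \<and> (\<exists>g. mod_endo R M s g \<and> g ` carrier M = N)"

definition quasi_pseudo_principally_injective ::
  "('a, 'c) ring_scheme \<Rightarrow> ('b, 'd) ring_scheme \<Rightarrow> ('b \<Rightarrow> 'a \<Rightarrow> 'b) \<Rightarrow> bool" where
  "quasi_pseudo_principally_injective R M s \<longleftrightarrow>
     (\<forall>A f. M_cyclic R M s A \<and> mod_hom R M s A (carrier M) f \<and> inj_on f A \<longrightarrow>
        (\<exists>g. mod_endo R M s g \<and> (\<forall>x\<in>A. g x = f x)))"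

definition self_similar ::
  "('a, 'c) ring_scheme \<Rightarrow> ('b, 'd) ring_scheme \<Rightarrow> ('b \<Rightarrow> 'a \<Rightarrow> 'b) \<Rightarrow> bool" where
  "self_similar R M s \<longleftrightarrow>
     (\<forall>N. submod R M s N \<and> N \<noteq> {\<zero>\<^bsub>M\<^esub>} \<longrightarrow>
        (\<exists>f. mod_hom R M s (carrier M) N f \<and> bij_betw f (carrier M) N))"

definition semisimple ::
  "('a, 'c) ring_scheme \<Rightarrow> ('b, 'd) ring_scheme \<Rightarrow> ('b \<Rightarrow> 'a \<Rightarrow> 'b) \<Rightarrow> bool" where
  "semisimple R M s \<longleftrightarrow>
     (\<forall>N. submod R M s N \<longrightarrow>
        (\<exists>K. submod R M s K \<and> N \<inter> K = {\<zero>\<^bsub>M\<^esub>} \<and>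
             (\<forall>z\<in>carrier M. \<exists>x\<in>N. \<exists>y\<in>K. z = x \<oplus>\<^bsub>M\<^esub> y)))"

end

theory Submission
  imports Defs
begin

text \<open>A submodule N is a direct summand exactly when some endomorphism of M retracts M onto N
(the projection along a complement; conversely the kernel of a retraction is a complement).
If M is semisimple, every homomorphism from a submodule therefore extends, composing with this
retraction. Conversely, let N \<noteq> 0 be a submodule and f : M \<rightarrow> N an isomorphism given by
self-similarity. Then N = f(M) is M-cyclic, so quasi-pseudo principal injectivity extends the
monomorphism f\<inverse> : N \<rightarrow> M to an endomorphism g, and f \<circ> g retracts M onto N.\<close>

definition direct_summand ::
  "('a, 'c) ring_scheme \<Rightarrow> ('b, 'd) ring_scheme \<Rightarrow> ('b \<Rightarrow> 'a \<Rightarrow> 'b) \<Rightarrow> 'b set \<Rightarrow> bool" where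
  "direct_summand R M s N \<longleftrightarrow> submod R M s N \<and>
     (\<exists>K. submod R M s K \<and> N \<inter> K = {\<zero>\<^bsub>M\<^esub>} \<and>
          (\<forall>z\<in>carrier M. \<exists>x\<in>N. \<exists>y\<in>K. z = x \<oplus>\<^bsub>M\<^esub> y))"

lemma semisimple_iff_direct_summand:
  "semisimple R M s \<longleftrightarrow> (\<forall>N. submod R M s N \<longrightarrow> direct_summand R M s N)"
  unfolding semisimple_def direct_summand_def by blast

lemma submod_subset: "submod R M s N \<Longrightarrow> N \<subseteq> carrier M"
  unfolding submod_def by blast

lemma submod_zero: "submod R M s N \<Longrightarrow> \<zero>\<^bsub>M\<^esub> \<in> N"
  unfolding submod_def by blast

lemma (in abelian_group) sum_eq_imp_minus_eq:
  assumes "x \<in> carrier G" "y \<in> carrier G" "x' \<in> carrier G" "y' \<in> carrier G"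
    and "x \<oplus> y = x' \<oplus> y'"
  shows "x \<ominus> x' = y' \<ominus> y"
proof -
  have "x = (x' \<oplus> y') \<ominus> y"
    using add.inv_solve_right[of x "x' \<oplus> y'" y] assms by (simp add: minus_eq)
  also have "\<dots> = (y' \<ominus> y) \<oplus> x'"
    using assms(1-4) by (simp add: minus_eq a_ac)
  finally show ?thesis
    using add.inv_solve_right[of "y' \<ominus> y" x x'] assms(1-4) by (simp add: minus_eq)
qed

locale right_mod = abelian_group M for M (structure) +
  fixes R and s
  assumes right_module: "right_module R M s"
begin

lemma smult_closed [simp]: "x \<in> carrier M \<Longrightarrow> r \<in> carrier R \<Longrightarrow> s x r \<in> carrier M"
  using right_module unfolding right_module_def by blast

lemma smult_add_distr: "x \<in> carrier M \<Longrightarrow> y \<in> carrier M \<Longrightarrow> r \<in> carrier R \<Longrightarrow>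
    s (x \<oplus> y) r = s x r \<oplus> s y r"
  using right_module unfolding right_module_def by blast

lemma smult_zero [simp]: "r \<in> carrier R \<Longrightarrow> s \<zero> r = \<zero>"
  using smult_add_distr[of \<zero> \<zero> r] by (simp add: add.r_cancel_one)

lemma submod_carrier: "submod R M s (carrier M)"
  unfolding submod_def by simp

lemma mod_hom_closed: "mod_hom R M s A B f \<Longrightarrow> x \<in> A \<Longrightarrow> f x \<in> B"
  unfolding mod_hom_def by blast

lemma mod_hom_add: "mod_hom R M s A B f \<Longrightarrow> x \<in> A \<Longrightarrow> y \<in> A \<Longrightarrow> f (x \<oplus> y) = f x \<oplus> f y"
  unfolding mod_hom_def by blast

lemma mod_hom_smult: "mod_hom R M s A B f \<Longrightarrow> x \<in> A \<Longrightarrow> r \<in> carrier R \<Longrightarrow> f (s x r) = s (f x) r"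
  unfolding mod_hom_def by blast

lemma mod_endo_zero:
  assumes "mod_endo R M s e" shows "e \<zero> = \<zero>"
proof -
  have "e \<zero> \<oplus> e \<zero> = e \<zero>"
    using mod_hom_add[OF assms[unfolded mod_endo_def], of \<zero> \<zero>] by simp
  then show ?thesis
    using mod_hom_closed[OF assms[unfolded mod_endo_def]] by (simp add: add.r_cancel_one)
qed

lemma mod_endo_minus:
  assumes e: "mod_endo R M s e" and "x \<in> carrier M" "y \<in> carrier M"
  shows "e (x \<ominus> y) = e x \<ominus> e y"
proof -
  have hom: "mod_hom R M s (carrier M) (carrier M) e" using e unfolding mod_endo_def .
  have "e y \<oplus> e (\<ominus> y) = \<zero>"
    using mod_hom_add[OF hom, of y "\<ominus> y"] mod_endo_zero[OF e] assms(3) by (simp add: r_neg)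
  then have "e (\<ominus> y) = \<ominus> e y"
    using mod_hom_closed[OF hom] assms(3) by (metis a_inv_closed minus_equality a_comm)
  then show ?thesis
    using mod_hom_add[OF hom, of x "\<ominus> y"] assms(2,3) by (simp add: minus_eq)
qed

lemma submod_kernel:
  assumes e: "mod_endo R M s e" shows "submod R M s {x \<in> carrier M. e x = \<zero>}"
proof -
  have hom: "mod_hom R M s (carrier M) (carrier M) e" using e unfolding mod_endo_def .
  have "e (\<ominus> x) = \<zero>" if "x \<in> carrier M" "e x = \<zero>" for x
    using mod_endo_minus[OF e, of \<zero> x] that mod_endo_zero[OF e] by (simp add: minus_eq)
  then show ?thesis
    unfolding submod_def
    using mod_endo_zero[OF e] mod_hom_add[OF hom] mod_hom_smult[OF hom] by auto
qed

lemma mod_hom_comp: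
  "mod_hom R M s A B f \<Longrightarrow> mod_hom R M s B C g \<Longrightarrow> mod_hom R M s A C (g \<circ> f)"
  unfolding mod_hom_def by (auto simp: Pi_iff)

lemma mod_hom_inv_into:
  assumes f: "mod_hom R M s (carrier M) N f" and bij: "bij_betw f (carrier M) N"
  shows "mod_hom R M s N (carrier M) (inv_into (carrier M) f)"
  unfolding mod_hom_def
proof (intro conjI ballI)
  let ?h = "inv_into (carrier M) f"
  have inj: "inj_on f (carrier M)" and im: "f ` carrier M = N"
    using bij unfolding bij_betw_def by auto
  have h_closed: "?h x \<in> carrier M" and f_h: "f (?h x) = x" if "x \<in> N" for x
    using that im by (auto simp: inv_into_into f_inv_into_f)
  show "?h \<in> N \<rightarrow> carrier M" using h_closed by blast
  fix x assume x: "x \<in> N"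
  show "?h (x \<oplus> y) = ?h x \<oplus> ?h y" if y: "y \<in> N" for y
  proof -
    have "x \<oplus> y = f (?h x \<oplus> ?h y)"
      using mod_hom_add[OF f, of "?h x" "?h y"] h_closed f_h x y by simp
    then show ?thesis using inv_into_f_f[OF inj] h_closed x y by simp
  qed
  show "?h (s x r) = s (?h x) r" if r: "r \<in> carrier R" for r
  proof -
    have "s x r = f (s (?h x) r)"
      using mod_hom_smult[OF f, of "?h x" r] h_closed f_h x r by simp
    then show ?thesis using inv_into_f_f[OF inj] h_closed x r by simp
  qed
qed

lemma mod_hom_mono_codomain: "mod_hom R M s A B f \<Longrightarrow> B \<subseteq> C \<Longrightarrow> mod_hom R M s A C f"
  unfolding mod_hom_def by blast

lemma direct_sum_decomp_unique:
  assumes N: "submod R M s N" and K: "submod R M s K" and NK: "N \<inter> K = {\<zero>}"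
    and "x \<in> N" "y \<in> K" "x' \<in> N" "y' \<in> K" "x \<oplus> y = x' \<oplus> y'"
  shows "x = x'"
proof -
  have carr: "x \<in> carrier M" "y \<in> carrier M" "x' \<in> carrier M" "y' \<in> carrier M"
    using assms(4-7) submod_subset[OF N] submod_subset[OF K] by auto
  have "x \<ominus> x' \<in> N" "y' \<ominus> y \<in> K"
    using assms(4-7) N K unfolding submod_def minus_eq by auto
  moreover have "x \<ominus> x' = y' \<ominus> y"
    using sum_eq_imp_minus_eq[OF carr assms(8)] .
  ultimately have "x \<ominus> x' = \<zero>" using NK by auto
  then show ?thesis using add.inv_solve_right'[of \<zero> x x'] carr by (simp add: minus_eq)
qed

lemma direct_summand_imp_retraction:
  assumes "direct_summand R M s N"
  obtains e where "mod_endo R M s e" "e \<in> carrier M \<rightarrow> N" "\<forall>x\<in>N. e x = x"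
proof -
  obtain K where N: "submod R M s N" and K: "submod R M s K" and NK: "N \<inter> K = {\<zero>}"
    and decomp: "\<forall>z\<in>carrier M. \<exists>x\<in>N. \<exists>y\<in>K. z = x \<oplus> y"
    using assms unfolding direct_summand_def by blast
  define e where "e z = (THE x. x \<in> N \<and> (\<exists>y\<in>K. z = x \<oplus> y))" for z
  have e_eq: "e (x \<oplus> y) = x" if "x \<in> N" "y \<in> K" for x y
    unfolding e_def
    using that direct_sum_decomp_unique[OF N K NK] by (intro the_equality) blast+
  have carr: "N \<subseteq> carrier M" "K \<subseteq> carrier M" using N K by (simp_all add: submod_subset)
  have add: "\<And>x y. x \<in> N \<Longrightarrow> y \<in> N \<Longrightarrow> x \<oplus> y \<in> N" "\<And>x y. x \<in> K \<Longrightarrow> y \<in> K \<Longrightarrow> x \<oplus> y \<in> K"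
    and smult: "\<And>x r. x \<in> N \<Longrightarrow> r \<in> carrier R \<Longrightarrow> s x r \<in> N"
      "\<And>x r. x \<in> K \<Longrightarrow> r \<in> carrier R \<Longrightarrow> s x r \<in> K"
    using N K unfolding submod_def by auto
  have e_into: "e \<in> carrier M \<rightarrow> N" using decomp e_eq by fastforce
  have "mod_endo R M s e"
    unfolding mod_endo_def mod_hom_def
  proof (intro conjI ballI)
    show "e \<in> carrier M \<rightarrow> carrier M" using e_into carr by auto
  next
    fix z w assume "z \<in> carrier M" "w \<in> carrier M"
    then obtain x y x' y' where "x \<in> N" "y \<in> K" "z = x \<oplus> y" "x' \<in> N" "y' \<in> K" "w = x' \<oplus> y'"
      using decomp by meson
    moreover from this have "z \<oplus> w = (x \<oplus> x') \<oplus> (y \<oplus> y')"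
      using carr by (auto simp: subset_iff a_ac)
    ultimately show "e (z \<oplus> w) = e z \<oplus> e w" using e_eq add carr by (auto simp: subset_iff)
  next
    fix z r assume "z \<in> carrier M" "r \<in> carrier R"
    then obtain x y where "x \<in> N" "y \<in> K" "z = x \<oplus> y" using decomp by meson
    then show "e (s z r) = s (e z) r"
      using e_eq smult smult_add_distr carr \<open>r \<in> carrier R\<close> by (auto simp: subset_iff)
  qed
  moreover have "\<forall>x\<in>N. e x = x" using e_eq[of _ \<zero>] submod_zero[OF K] carr by (auto simp: subset_iff)
  ultimately show ?thesis using that e_into by blast
qed

lemma retraction_imp_direct_summand:
  assumes N: "submod R M s N" and e: "mod_endo R M s e"
    and e_into: "e \<in> carrier M \<rightarrow> N" and e_id: "\<forall>x\<in>N. e x = x"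
  shows "direct_summand R M s N"
proof -
  let ?K = "{x \<in> carrier M. e x = \<zero>}"
  have carr: "N \<subseteq> carrier M" using submod_subset[OF N] .
  have "N \<inter> ?K = {\<zero>}" using e_id mod_endo_zero[OF e] submod_zero[OF N] carr by auto
  moreover have "\<exists>x\<in>N. \<exists>y\<in>?K. z = x \<oplus> y" if z: "z \<in> carrier M" for z
  proof (intro bexI)
    have ez: "e z \<in> N" "e z \<in> carrier M" using e_into z carr by auto
    show "z = e z \<oplus> (z \<ominus> e z)" using z ez by (simp add: minus_eq a_lcomm r_neg r_zero)
    show "z \<ominus> e z \<in> ?K" using mod_endo_minus[OF e z ez(2)] e_id ez z by (simp add: r_neg minus_eq)
  qed (use e_into z in auto)
  ultimately show ?thesis
    unfolding direct_summand_def using N submod_kernel[OF e] by blast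
qed

lemma mod_hom_extend_from_direct_summand:
  assumes "direct_summand R M s A" and f: "mod_hom R M s A (carrier M) f"
  shows "\<exists>g. mod_endo R M s g \<and> (\<forall>x\<in>A. g x = f x)"
proof -
  obtain e where e: "mod_endo R M s e" "e \<in> carrier M \<rightarrow> A" "\<forall>x\<in>A. e x = x"
    using direct_summand_imp_retraction[OF assms(1)] .
  have "mod_hom R M s (carrier M) A e" using e(1,2) unfolding mod_endo_def mod_hom_def by blast
  then have "mod_endo R M s (f \<circ> e)" using mod_hom_comp f unfolding mod_endo_def by blast
  then show ?thesis using e(3) by auto
qed

lemma semisimple_imp_quasi_pseudo_principally_injective:
  assumes "semisimple R M s" shows "quasi_pseudo_principally_injective R M s"
  unfolding quasi_pseudo_principally_injective_def
proof (intro allI impI, elim conjE)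
  fix A f assume "M_cyclic R M s A" and "mod_hom R M s A (carrier M) f"
  moreover have "submod R M s A" using \<open>M_cyclic R M s A\<close> unfolding M_cyclic_def by blast
  ultimately show "\<exists>g. mod_endo R M s g \<and> (\<forall>x\<in>A. g x = f x)"
    using assms mod_hom_extend_from_direct_summand unfolding semisimple_iff_direct_summand by blast
qed

lemma direct_summand_zero: "direct_summand R M s {\<zero>}"
  unfolding direct_summand_def
proof (intro conjI exI[of _ "carrier M"])
  show "submod R M s {\<zero>}" unfolding submod_def by simp
qed (simp_all add: submod_carrier)

lemma self_similar_quasi_pseudo_principally_injective_imp_semisimple:
  assumes ss: "self_similar R M s" and q: "quasi_pseudo_principally_injective R M s"
  shows "semisimple R M s"
  unfolding semisimple_iff_direct_summand
proof (intro allI impI)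
  fix N assume N: "submod R M s N"
  show "direct_summand R M s N"
  proof (cases "N = {\<zero>}")
    case True
    then show ?thesis using direct_summand_zero by simp
  next
    case False
    then obtain f where f: "mod_hom R M s (carrier M) N f" and bij: "bij_betw f (carrier M) N"
      using ss N unfolding self_similar_def by blast
    let ?h = "inv_into (carrier M) f"
    have carr: "N \<subseteq> carrier M" using submod_subset[OF N] .
    have "M_cyclic R M s N"
      unfolding M_cyclic_def mod_endo_def
      using N mod_hom_mono_codomain[OF f carr] bij bij_betw_imp_surj_on by blast
    moreover have "inj_on ?h N" using bij bij_betw_imp_surj_on inj_on_inv_into by blast
    ultimately obtain g where g: "mod_endo R M s g" and g_ext: "\<forall>x\<in>N. g x = ?h x"
      using q mod_hom_inv_into[OF f bij]
      unfolding quasi_pseudo_principally_injective_def by blast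
    have fg: "mod_hom R M s (carrier M) N (f \<circ> g)"
      using mod_hom_comp g f unfolding mod_endo_def by blast
    show ?thesis
    proof (rule retraction_imp_direct_summand[OF N])
      show "mod_endo R M s (f \<circ> g)" using mod_hom_mono_codomain[OF fg carr] unfolding mod_endo_def .
      show "f \<circ> g \<in> carrier M \<rightarrow> N" using fg unfolding mod_hom_def by (elim conjE)
      show "\<forall>x\<in>N. (f \<circ> g) x = x"
        using g_ext bij_betw_imp_surj_on[OF bij] by (simp add: f_inv_into_f)
    qed
  qed
qed

end

theorem proposition2p4:
  fixes R :: "('a, 'c) ring_scheme" and M :: "('b, 'd) ring_scheme" and s :: "'b \<Rightarrow> 'a \<Rightarrow> 'b"
  assumes "right_module R M s"
    and "self_similar R M s"
  shows "quasi_pseudo_principally_injective R M s \<longleftrightarrow> semisimple R M s"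
proof -
  have "abelian_group M" using assms(1) unfolding right_module_def by blast
  then interpret right_mod M R s
    using assms(1) by (intro right_mod.intro right_mod_axioms.intro)
  show ?thesis
    using self_similar_quasi_pseudo_principally_injective_imp_semisimple[OF assms(2)] semisimple_imp_quasi_pseudo_principally_injective by (rule iffI)
qed

end
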